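(* Let $c<d$ be positive integers with $d\geq 4$, and let $X_{c,d}\subset\mathbb{P}^5$ be the threefold defined by $$x_0^c+x_1^c+x_2^c=x_3^c+x_4^c+x_5^c,\qquad x_0^d+x_1^d+x_2^d=x_3^d+x_4^d+x_5^d.$$ If $\Pi\subset X_{c,d}$ is a plane containing a rational point $[x_0,\dots,x_5]\in\mathbb{P}^5(\mathbb{Q})$ whose coordinates $x_0,\dots,x_5$ are all non-zero and of the same sign, then $\Pi$ is one of the six trivial planes $$x_0=x_i,\quad x_1=x_j,\quad x_2=x_k,$$ where $(i,j,k)$ is a permutation of $(3,4,5)$. *)

theory Defs
  imports "HOL-Analysis.Analysis"
begin

text \<open>Points of projective 5-space over the complex numbers are represented by
nonzero vectors in complex^6 (coordinates x_0..x_5 = v$0..v$5).  A projective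
plane is represented by its affine cone, a 3-dimensional complex linear subspace
of complex^6, i.e. the complex span of three complex-linearly independent vectors.\<close>

definition cspan3 :: "complex^6 \<Rightarrow> complex^6 \<Rightarrow> complex^6 \<Rightarrow> (complex^6) set" where
  "cspan3 u v w = {(\<chi> i. a * u$i + b * v$i + c * w$i) | a b c. True}"

definition cindep3 :: "complex^6 \<Rightarrow> complex^6 \<Rightarrow> complex^6 \<Rightarrow> bool" where
  "cindep3 u v w \<longleftrightarrow> (\<forall>a b c. (\<forall>i. a * u$i + b * v$i + c * w$i = 0) \<longrightarrow> a = 0 \<and> b = 0 \<and> c = 0)"

definition is_plane :: "(complex^6) set \<Rightarrow> bool" where
  "is_plane P \<longleftrightarrow> (\<exists>u v w. cindep3 u v w \<and> P = cspan3 u v w)"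

text \<open>The threefold X_{c,d}: membership of the cone (the equations are homogeneous).\<close>
definition in_X :: "nat \<Rightarrow> nat \<Rightarrow> complex^6 \<Rightarrow> bool" where
  "in_X c d x \<longleftrightarrow>
     x$0 ^ c + x$1 ^ c + x$2 ^ c = x$3 ^ c + x$4 ^ c + x$5 ^ c \<and>
     x$0 ^ d + x$1 ^ d + x$2 ^ d = x$3 ^ d + x$4 ^ d + x$5 ^ d"

end

theory Submission
  imports Defs "HOL-Computational_Algebra.Polynomial"
begin

(* Put p_a = |q_a|, so that the point Q = (p_0, ..., p_5) lies in the cone P, and for x in P
   consider the ratios r_a = x_a / p_a. The whole line Q + s x lies on the hypersurface
   y_0^d + y_1^d + y_2^d = y_3^d + y_4^d + y_5^d; expanding in s gives
   sum_a (+-) p_a^d r_a^k = 0 for all k <= d, and when the r_a take at most d + 1 values,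
   Lagrange interpolation turns these moment identities into a balance: for every value z, the
   positive weights p_a^d of the left coordinates 0, 1, 2 with r_a = z add up to those of the
   right coordinates 3, 4, 5 with r_a = z. Since d >= 4 this applies whenever the left ratios
   take at most two values. Hence x_0 = x_1 = x_2 = 0 forces x = 0, and the plane contains
   points V, W with left ratios (0, 0, 1) and (0, 1, 0) whose right ratios lie in {0, 1}.
   The left ratios of V + 2 W are the distinct numbers 0, 2, 1, so its balance matches the right
   coordinates bijectively with the left ones, preserving p and the ratios of V and W. Then Q, V
   and W lie in a trivial plane, and both planes are the graph of the same linear map on the
   first three coordinates. *)

section \<open>Power sums along a line\<close>

lemma poly_eq_sum_coeff_upto:
  fixes p :: "'a::comm_semiring_1 poly"
  assumes "degree p \<le> n"
  shows "poly p x = (\<Sum>i\<le>n. coeff p i * x ^ i)"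
proof -
  have "poly p x = (\<Sum>i\<le>degree p. coeff p i * x ^ i)"
    by (rule poly_altdef)
  also have "\<dots> = (\<Sum>i\<le>n. coeff p i * x ^ i)"
    using assms by (intro sum.mono_neutral_left) (auto simp: coeff_eq_0)
  finally show ?thesis .
qed

lemma fibre_sum_eq_0_if_moments_vanish:
  fixes w r :: "'i \<Rightarrow> 'a::idom"
  assumes "finite S" and "card (r ` S) \<le> Suc d"
    and moments: "\<And>k. k \<le> d \<Longrightarrow> (\<Sum>a\<in>S. w a * r a ^ k) = 0"
  shows "sum w {a\<in>S. r a = z} = 0"
proof (cases "z \<in> r ` S")
  case False
  then show ?thesis by (intro sum.neutral) auto
next
  case True
  define Y where "Y = r ` S - {z}"
  define g where "g = (\<Prod>y\<in>Y. [:-y, 1:])"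
  have "finite Y" using \<open>finite S\<close> by (simp add: Y_def)
  have "degree g \<le> card Y"
    using degree_prod_sum_le[OF \<open>finite Y\<close>, of "\<lambda>y. [:-y, 1:]"] by (simp add: g_def)
  also have "card Y \<le> d"
    using True assms(1,2) by (simp add: Y_def card_Diff_singleton)
  finally have "degree g \<le> d" .
  have root: "poly g y = 0 \<longleftrightarrow> y \<in> Y" for y
    using \<open>finite Y\<close> by (simp add: g_def poly_prod)
  have "(\<Sum>a\<in>S. w a * poly g (r a)) = (\<Sum>k\<le>d. coeff g k * (\<Sum>a\<in>S. w a * r a ^ k))"
    by (simp add: poly_eq_sum_coeff_upto[OF \<open>degree g \<le> d\<close>] sum_distrib_left
        sum.swap[of _ S] mult_ac)
  also have "\<dots> = 0"
    by (simp add: moments)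
  moreover have "(\<Sum>a\<in>S. w a * poly g (r a)) = poly g z * sum w {a\<in>S. r a = z}"
  proof -
    have "w a * poly g (r a) = poly g z * (if r a = z then w a else 0)" if "a \<in> S" for a
      using that by (auto simp: root Y_def)
    then show ?thesis
      by (simp add: sum.inter_filter[OF \<open>finite S\<close>] sum_distrib_left)
  qed
  moreover have "poly g z \<noteq> 0"
    by (simp add: root Y_def)
  ultimately show ?thesis by simp
qed

lemma coeffs_vanish_if_power_sum_on_line_vanishes:
  fixes e Q x :: "'i \<Rightarrow> 'a::real_normed_field"
  assumes line: "\<And>s. (\<Sum>a\<in>S. e a * (Q a + s * x a) ^ d) = 0" and "k \<le> d"
  shows "(\<Sum>a\<in>S. e a * Q a ^ (d - k) * x a ^ k) = 0"
proof -
  define c where "c k = of_nat (d choose k) * (\<Sum>a\<in>S. e a * Q a ^ (d - k) * x a ^ k)" for k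
  have "(\<Sum>k\<le>d. c k * s ^ k) = 0" for s
  proof -
    have "(\<Sum>k\<le>d. c k * s ^ k)
        = (\<Sum>a\<in>S. e a * (\<Sum>k\<le>d. of_nat (d choose k) * (s * x a) ^ k * Q a ^ (d - k)))"
      by (simp add: c_def sum_distrib_left sum_distrib_right sum.swap[of _ S]
          power_mult_distrib mult_ac)
    also have "\<dots> = (\<Sum>a\<in>S. e a * (Q a + s * x a) ^ d)"
      by (simp add: binomial_ring add.commute[of "Q _"])
    finally show ?thesis using line by simp
  qed
  then have "c k = 0"
    using polyfun_eq_0 \<open>k \<le> d\<close> by blast
  then show ?thesis
    using \<open>k \<le> d\<close> by (simp add: c_def)
qed

lemma fibre_weights_balance_if_line_in_power_sum_hypersurface:
  fixes Q x :: "'i \<Rightarrow> 'a::real_normed_field"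
  assumes "finite L" and "finite R" and "L \<inter> R = {}" and "\<And>a. a \<in> L \<union> R \<Longrightarrow> Q a \<noteq> 0"
    and "card ((\<lambda>a. x a / Q a) ` (L \<union> R)) \<le> Suc d"
    and line: "\<And>s. (\<Sum>a\<in>L. (Q a + s * x a) ^ d) = (\<Sum>a\<in>R. (Q a + s * x a) ^ d)"
  shows "(\<Sum>a | a \<in> L \<and> x a / Q a = z. Q a ^ d) = (\<Sum>a | a \<in> R \<and> x a / Q a = z. Q a ^ d)"
proof -
  define e where "e a = (if a \<in> L then 1 else - 1 :: 'a)" for a
  have signed_sum: "(\<Sum>a | a \<in> L \<union> R \<and> P a. e a * f a)
      = (\<Sum>a | a \<in> L \<and> P a. f a) - (\<Sum>a | a \<in> R \<and> P a. f a)" for P f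
  proof -
    let ?A = "{a. a \<in> L \<and> P a}" and ?B = "{a. a \<in> R \<and> P a}"
    have "{a. a \<in> L \<union> R \<and> P a} = ?A \<union> ?B"
      by auto
    moreover have "(\<Sum>a\<in>?A. e a * f a) = sum f ?A"
      by (simp add: e_def)
    moreover have "(\<Sum>a\<in>?B. e a * f a) = - sum f ?B"
      using \<open>L \<inter> R = {}\<close> unfolding sum_negf[symmetric]
      by (intro sum.cong) (auto simp: e_def)
    ultimately show ?thesis
      using assms(1-3) by (simp add: sum.union_disjoint disjoint_iff)
  qed
  have "(\<Sum>a\<in>L \<union> R. e a * (Q a + s * x a) ^ d) = 0" for s
    using signed_sum[where P = "\<lambda>_. True"] line by (simp only: simp_thms Collect_mem_eq) simp
  then have "(\<Sum>a\<in>L \<union> R. e a * Q a ^ (d - k) * x a ^ k) = 0" if "k \<le> d" for k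
    using coeffs_vanish_if_power_sum_on_line_vanishes that by blast
  moreover have "e a * Q a ^ (d - k) * x a ^ k = e a * Q a ^ d * (x a / Q a) ^ k"
    if "a \<in> L \<union> R" "k \<le> d" for a k
    using assms(4)[OF that(1)] that(2)
    by (simp add: power_divide power_diff)
  ultimately have "(\<Sum>a\<in>L \<union> R. e a * Q a ^ d * (x a / Q a) ^ k) = 0" if "k \<le> d" for k
    using that by (metis (no_types, lifting) sum.cong)
  then have "(\<Sum>a | a \<in> L \<union> R \<and> x a / Q a = z. e a * Q a ^ d) = 0"
    using assms(1,2,5) by (intro fibre_sum_eq_0_if_moments_vanish) auto
  then show ?thesis
    unfolding signed_sum by simp
qed

section \<open>Balanced fibres\<close>

lemma balanced_fibres_image_subset:
  fixes w :: "'i \<Rightarrow> 'b::ordered_cancel_comm_monoid_add"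
  assumes "finite R" and "\<And>b. b \<in> R \<Longrightarrow> 0 < w b"
    and balance: "\<And>z. sum w {a\<in>L. \<rho> a = z} = sum w {b\<in>R. \<rho> b = z}"
  shows "\<rho> ` R \<subseteq> \<rho> ` L"
proof
  fix z assume "z \<in> \<rho> ` R"
  then have "0 < sum w {b\<in>R. \<rho> b = z}"
    using assms(1,2) by (intro sum_pos) auto
  then have "{a\<in>L. \<rho> a = z} \<noteq> {}"
    using balance[of z] by (metis less_irrefl sum.empty)
  then show "z \<in> \<rho> ` L" by auto
qed

lemma balanced_fibres_matching:
  fixes w :: "'i \<Rightarrow> 'b::ordered_cancel_comm_monoid_add"
  assumes "finite R" and "card R \<le> card L" and "inj_on \<rho> L" and "\<And>a. a \<in> L \<Longrightarrow> 0 < w a"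
    and balance: "\<And>z. sum w {a\<in>L. \<rho> a = z} = sum w {b\<in>R. \<rho> b = z}"
  obtains \<sigma> where "bij_betw \<sigma> L R" and "\<And>a. a \<in> L \<Longrightarrow> \<rho> (\<sigma> a) = \<rho> a \<and> w (\<sigma> a) = w a"
proof -
  have left_fibre: "{a'\<in>L. \<rho> a' = \<rho> a} = {a}" if "a \<in> L" for a
    using that \<open>inj_on \<rho> L\<close> by (auto dest: inj_onD)
  have "{b\<in>R. \<rho> b = \<rho> a} \<noteq> {}" if "a \<in> L" for a
  proof -
    have "sum w {b\<in>R. \<rho> b = \<rho> a} = w a"
      using balance[of "\<rho> a"] left_fibre[OF that] by simp
    then show ?thesis
      using assms(4)[OF that] by (metis less_irrefl sum.empty)
  qed
  then have "\<forall>a\<in>L. \<exists>b. b \<in> R \<and> \<rho> b = \<rho> a"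
    by blast
  then obtain \<sigma> where \<sigma>: "\<And>a. a \<in> L \<Longrightarrow> \<sigma> a \<in> R \<and> \<rho> (\<sigma> a) = \<rho> a"
    by metis
  have "inj_on \<sigma> L"
    using \<sigma> \<open>inj_on \<rho> L\<close> by (metis inj_on_def)
  have "\<sigma> ` L = R"
  proof (rule card_subset_eq[OF \<open>finite R\<close>])
    show "\<sigma> ` L \<subseteq> R" using \<sigma> by auto
    then have "card (\<sigma> ` L) \<le> card R" by (rule card_mono[OF \<open>finite R\<close>])
    then show "card (\<sigma> ` L) = card R"
      using \<open>card R \<le> card L\<close> card_image[OF \<open>inj_on \<sigma> L\<close>] by simp
  qed
  have right_fibre: "{b\<in>R. \<rho> b = \<rho> a} = {\<sigma> a}" if "a \<in> L" for a
    using that \<sigma> \<open>\<sigma> ` L = R\<close> left_fibre by fastforce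
  show thesis
  proof
    show "bij_betw \<sigma> L R"
      using \<open>inj_on \<sigma> L\<close> \<open>\<sigma> ` L = R\<close> by (simp add: bij_betw_def)
    show "\<rho> (\<sigma> a) = \<rho> a \<and> w (\<sigma> a) = w a" if "a \<in> L" for a
      using balance[of "\<rho> a"] left_fibre[OF that] right_fibre[OF that] \<sigma>[OF that] by simp
  qed
qed

lemma binary_digits_eq:
  fixes \<alpha> \<beta> \<alpha>' \<beta>' :: "'a::ring_char_0"
  assumes "\<alpha> \<in> {0, 1}" "\<beta> \<in> {0, 1}" "\<alpha>' \<in> {0, 1}" "\<beta>' \<in> {0, 1}" and "\<alpha> + 2 * \<beta> = \<alpha>' + 2 * \<beta>'"
  shows "\<alpha> = \<alpha>' \<and> \<beta> = \<beta>'"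
  using assms by auto

lemma nonzero_kernel_if_det_eq_0:
  fixes A :: "'a::field^'n^'n"
  assumes "det A = 0"
  shows "\<exists>x. x \<noteq> 0 \<and> A *v x = 0"
  using assms invertible_det_nz invertible_left_inverse matrix_left_invertible_ker by metis

lemma subspace_eq_span_if_coords_determine:
  fixes S :: "('a::field^'n) set" and e :: "'n \<Rightarrow> 'a^'n"
  assumes "vec.subspace S" and "finite I"
    and determined: "\<And>x. x \<in> S \<Longrightarrow> (\<forall>i\<in>I. x$i = 0) \<Longrightarrow> x = 0"
    and e: "\<And>i. i \<in> I \<Longrightarrow> e i \<in> S"
    and unit: "\<And>i j. i \<in> I \<Longrightarrow> j \<in> I \<Longrightarrow> e i $ j = (if i = j then 1 else 0)"
  shows "S = vec.span (e ` I)"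
proof
  show "vec.span (e ` I) \<subseteq> S"
    using assms(1) e by (intro vec.span_minimal) auto
  show "S \<subseteq> vec.span (e ` I)"
  proof
    fix x assume "x \<in> S"
    define y where "y = (\<Sum>i\<in>I. x$i *s e i)"
    have "y \<in> vec.span (e ` I)"
      unfolding y_def by (intro vec.span_sum vec.span_scale vec.span_base) auto
    moreover have "x - y = 0"
    proof (rule determined)
      have "y \<in> S"
        unfolding y_def using assms(1) e by (intro vec.subspace_sum vec.subspace_scale) auto
      then show "x - y \<in> S"
        using \<open>x \<in> S\<close> assms(1) by (simp add: vec.subspace_diff)
      have "y $ j = x $ j" if "j \<in> I" for j
      proof -
        have "x$i * e i $ j = (if i = j then x$j else 0)" if "i \<in> I" for i
          using that \<open>j \<in> I\<close> by (simp add: unit)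
        then have "y $ j = (\<Sum>i\<in>I. if i = j then x$j else 0)"
          by (simp add: y_def)
        then show ?thesis
          using that \<open>finite I\<close> by simp
      qed
      then show "\<forall>j\<in>I. (x - y) $ j = 0" by simp
    qed
    ultimately show "x \<in> vec.span (e ` I)" by simp
  qed
qed

lemma subspaces_eq_if_coords_determine:
  fixes S T :: "('a::field^'n) set"
  assumes "vec.subspace S" and "vec.subspace T" and "finite I"
    and "\<And>x. x \<in> S \<Longrightarrow> (\<forall>i\<in>I. x$i = 0) \<Longrightarrow> x = 0"
    and "\<And>x. x \<in> T \<Longrightarrow> (\<forall>i\<in>I. x$i = 0) \<Longrightarrow> x = 0"
    and units: "\<And>i. i \<in> I \<Longrightarrow> \<exists>x\<in>S \<inter> T. \<forall>j\<in>I. x$j = (if i = j then 1 else 0)"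
  shows "S = T"
proof -
  obtain e where e: "\<And>i. i \<in> I \<Longrightarrow> e i \<in> S \<inter> T \<and> (\<forall>j\<in>I. e i $ j = (if i = j then 1 else 0))"
    using units by metis
  have "S = vec.span (e ` I)"
    using assms(1,3,4) e by (intro subspace_eq_span_if_coords_determine) auto
  also have "\<dots> = T"
    using assms(2,3,5) e by (intro subspace_eq_span_if_coords_determine[symmetric]) auto
  finally show ?thesis .
qed

lemma UNIV_6: "(UNIV :: 6 set) = {0, 1, 2} \<union> {3, 4, 5}"
proof -
  have "x \<in> {0, 1, 2, 3, 4, 5}" for x :: 6
  proof (induct x)
    case (of_int z)
    then have "z \<in> {0, 1, 2, 3, 4, 5}" by fastforce
    then show ?case by auto
  qed
  then show ?thesis by auto
qed

lemma of_real_of_rat: "of_real (of_rat r) = (of_rat r :: 'a::real_field)"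
  by (cases r) (simp add: of_rat_rat)

lemma subspace_cspan3: "vec.subspace (cspan3 u v w)"
proof -
  let ?comb = "\<lambda>a b c. (\<chi> i. a * u$i + b * v$i + c * w$i) :: complex^6"
  have add: "?comb a b c + ?comb a' b' c' = ?comb (a + a') (b + b') (c + c')"
    and scale: "t *s ?comb a b c = ?comb (t * a) (t * b) (t * c)"
    and zero: "0 = ?comb 0 0 0" for a b c a' b' c' t
    by (simp_all add: vec_eq_iff algebra_simps)
  show ?thesis
    unfolding vec.subspace_def cspan3_def
  proof (safe intro!: CollectI)
    show "\<exists>a b c. 0 = ?comb a b c \<and> True"
      using zero by blast
    show "\<exists>a'' b'' c''. ?comb a b c + ?comb a' b' c' = ?comb a'' b'' c'' \<and> True" for a b c a' b' c'
      using add[of a b c a' b' c'] by blast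
    show "\<exists>a' b' c'. t *s ?comb a b c = ?comb a' b' c' \<and> True" for t a b c
      using scale[of t a b c] by blast
  qed
qed

lemma subspace_if_is_plane: "is_plane P \<Longrightarrow> vec.subspace P"
  unfolding is_plane_def using subspace_cspan3 by blast

lemma abs_point_in_subspace:
  assumes "vec.subspace P" and "(\<chi> i. of_rat (q$i)) \<in> P" and "(\<forall>i. 0 < q$i) \<or> (\<forall>i. q$i < 0)"
  shows "(\<chi> i. complex_of_real \<bar>of_rat (q$i)\<bar>) \<in> P"
  using assms(3)
proof
  assume "\<forall>i. 0 < q$i"
  then have "(\<chi> i. complex_of_real \<bar>of_rat (q$i)\<bar>) = (\<chi> i. of_rat (q$i))"
    by (simp add: vec_eq_iff of_real_of_rat abs_of_pos)
  then show ?thesis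
    using assms(2) by simp
next
  assume "\<forall>i. q$i < 0"
  then have "(\<chi> i. complex_of_real \<bar>of_rat (q$i)\<bar>) = (-1) *s (\<chi> i. of_rat (q$i))"
    by (simp add: vec_eq_iff of_real_of_rat of_rat_minus abs_of_neg)
  then show ?thesis
    using vec.subspace_scale[OF assms(1,2), of "-1"] by (simp only:)
qed

lemma plane_has_nonzero_point_with_two_zero_coords:
  assumes "is_plane P"
  shows "\<exists>v\<in>P. v \<noteq> 0 \<and> v$i = 0 \<and> v$j = 0"
proof -
  obtain u v w where indep: "cindep3 u v w" and P: "P = cspan3 u v w"
    using assms unfolding is_plane_def by blast
  \<comment> \<open>The conditions at the coordinates i and j on the coefficients, padded with a zero row.\<close>
  define A :: "complex^3^3" where
    "A = (\<chi> r s. if r = 1 then vector [u$i, v$i, w$i] $ s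
                  else if r = 2 then vector [u$j, v$j, w$j] $ s else 0)"
  have "row 3 A = 0"
    by (simp add: A_def row_def vec_eq_iff)
  then obtain c where "c \<noteq> 0" and c: "A *v c = 0"
    using nonzero_kernel_if_det_eq_0 det_zero_row(2) by blast
  define x where "x = (\<chi> t. c$1 * u$t + c$2 * v$t + c$3 * w$t)"
  have "x \<in> P"
    unfolding P cspan3_def x_def by blast
  moreover have "x$i = 0" "x$j = 0"
  proof -
    have "(A *v c)$1 = x$i" "(A *v c)$2 = x$j"
      unfolding matrix_vector_mult_def sum_3 by (simp_all add: A_def x_def mult.commute)
    then show "x$i = 0" "x$j = 0"
      using c by simp_all
  qed
  moreover have "x \<noteq> 0"
  proof
    assume "x = 0"
    then have "\<forall>t. c$1 * u$t + c$2 * v$t + c$3 * w$t = 0"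
      by (simp add: x_def vec_eq_iff)
    then have "c$1 = 0 \<and> c$2 = 0 \<and> c$3 = 0"
      using indep unfolding cindep3_def by blast
    then show False
      using \<open>c \<noteq> 0\<close> by (simp add: vec_eq_iff forall_3)
  qed
  ultimately show ?thesis by blast
qed

definition trivial_plane :: "(6 \<Rightarrow> 6) \<Rightarrow> (complex^6) set" where
  "trivial_plane \<sigma> = {x. \<forall>t\<in>{0, 1, 2}. x$(\<sigma> t) = x$t}"

lemma subspace_trivial_plane: "vec.subspace (trivial_plane \<sigma>)"
  by (auto simp: vec.subspace_def trivial_plane_def)

lemma trivial_plane_coords_determine:
  assumes "bij_betw \<sigma> {0, 1, 2} {3, 4, 5}" and "x \<in> trivial_plane \<sigma>" and left: "\<forall>t\<in>{0, 1, 2}. x$t = 0"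
  shows "x = 0"
proof -
  have right: "x $ a = 0" if "a \<in> \<sigma> ` {0, 1, 2}" for a
    using that \<open>x \<in> trivial_plane \<sigma>\<close> left by (auto simp: trivial_plane_def)
  have "\<sigma> ` {0, 1, 2} = {3, 4, 5}"
    using assms(1) by (rule bij_betw_imp_surj_on)
  then have "a \<in> {0, 1, 2} \<union> \<sigma> ` {0, 1, 2}" for a
    using UNIV_6 by auto
  then have "x $ a = 0" for a
    using left right by blast
  then show ?thesis
    by (simp add: vec_eq_iff)
qed

section \<open>Cones through a point with positive coordinates\<close>

locale cone_through_positive_point =
  fixes P :: "(complex^6) set" and d :: nat and p :: "6 \<Rightarrow> real"
  assumes subspace: "vec.subspace P"
    and power_sums: "\<And>x. x \<in> P \<Longrightarrow> x$0^d + x$1^d + x$2^d = x$3^d + x$4^d + x$5^d"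
    and p_pos: "\<And>a. 0 < p a"
    and positive_point: "(\<chi> a. complex_of_real (p a)) \<in> P"
    and degree_ge_4: "4 \<le> d"
begin

definition ratio :: "complex^6 \<Rightarrow> 6 \<Rightarrow> complex" where
  "ratio x a = x$a / complex_of_real (p a)"

lemma coord_eq_ratio: "x$a = ratio x a * complex_of_real (p a)"
  using p_pos[of a] by (simp add: ratio_def)

lemma ratio_fibres_balance:
  assumes "x \<in> P" and "card (ratio x ` UNIV) \<le> Suc d"
  shows "(\<Sum>a | a \<in> {0, 1, 2} \<and> ratio x a = z. p a ^ d)
       = (\<Sum>a | a \<in> {3, 4, 5} \<and> ratio x a = z. p a ^ d)"
proof -
  let ?Q = "\<lambda>a. complex_of_real (p a)"
  have "(\<Sum>a | a \<in> {0, 1, 2} \<and> x$a / ?Q a = z. ?Q a ^ d)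
      = (\<Sum>a | a \<in> {3, 4, 5} \<and> x$a / ?Q a = z. ?Q a ^ d)"
  proof (rule fibre_weights_balance_if_line_in_power_sum_hypersurface)
    show "?Q a \<noteq> 0" for a
      using p_pos[of a] by simp
    show "card ((\<lambda>a. x$a / ?Q a) ` ({0, 1, 2} \<union> {3, 4, 5})) \<le> Suc d"
      using assms(2) by (simp add: ratio_def UNIV_6)
    show "(\<Sum>a\<in>{0, 1, 2}. (?Q a + s * x$a) ^ d) = (\<Sum>a\<in>{3, 4, 5}. (?Q a + s * x$a) ^ d)" for s
    proof -
      have "(\<chi> a. ?Q a) + s *s x \<in> P"
        using subspace positive_point \<open>x \<in> P\<close> by (simp add: vec.subspace_add vec.subspace_scale)
      from power_sums[OF this] show ?thesis by (simp add: add.assoc)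
    qed
  qed simp_all
  then have "complex_of_real (\<Sum>a | a \<in> {0, 1, 2} \<and> ratio x a = z. p a ^ d)
           = complex_of_real (\<Sum>a | a \<in> {3, 4, 5} \<and> ratio x a = z. p a ^ d)"
    by (simp add: ratio_def)
  then show ?thesis
    by (simp only: of_real_eq_iff)
qed

lemma right_ratios_among_left_ratios:
  assumes "x \<in> P" and "card (ratio x ` {0, 1, 2}) \<le> 2"
  shows "ratio x ` {3, 4, 5} \<subseteq> ratio x ` {0, 1, 2}"
proof (rule balanced_fibres_image_subset)
  have "card (ratio x ` {3, 4, 5}) \<le> 3"
    using card_image_le[of "{3, 4, 5}" "ratio x"] by simp
  moreover have "ratio x ` UNIV = ratio x ` {0, 1, 2} \<union> ratio x ` {3, 4, 5}"
    by (simp add: UNIV_6 image_Un)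
  ultimately have "card (ratio x ` UNIV) \<le> Suc d"
    using assms(2) degree_ge_4 card_Un_le[of "ratio x ` {0, 1, 2}" "ratio x ` {3, 4, 5}"] by simp
  then show "(\<Sum>a | a \<in> {0, 1, 2} \<and> ratio x a = z. p a ^ d)
           = (\<Sum>a | a \<in> {3, 4, 5} \<and> ratio x a = z. p a ^ d)" for z
    using ratio_fibres_balance \<open>x \<in> P\<close> by blast
qed (simp_all add: p_pos)

lemma eq_0_if_first_coords_eq_0:
  assumes "x \<in> P" and "x$0 = 0" "x$1 = 0" "x$2 = 0"
  shows "x = 0"
proof -
  have "ratio x ` {0, 1, 2} = {0}"
    using assms by (simp add: ratio_def)
  then have "ratio x ` {3, 4, 5} \<subseteq> {0}"
    using right_ratios_among_left_ratios[OF \<open>x \<in> P\<close>] by simp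
  then have "x$a = 0" if "a \<in> {3, 4, 5}" for a
    using that coord_eq_ratio[of x a] by auto
  moreover have "a \<in> {0, 1, 2} \<union> {3, 4, 5}" for a :: 6
    unfolding UNIV_6[symmetric] by (rule UNIV_I)
  ultimately have "x$a = 0" for a
    using assms(2-4) by auto
  then show ?thesis
    by (simp add: vec_eq_iff)
qed

lemma exists_normalised_point:
  assumes "v \<in> P" "v \<noteq> 0" and "{i, j, k} = {0, 1, 2}" and "v$i = 0" "v$j = 0"
  obtains V where "V \<in> P" "ratio V i = 0" "ratio V j = 0" "ratio V k = 1"
    and "ratio V ` {3, 4, 5} \<subseteq> {0, 1}"
proof
  have "v$k \<noteq> 0"
  proof
    assume "v$k = 0"
    have "v$t = 0" if "t \<in> {0, 1, 2}" for t
    proof -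
      from that have "t \<in> {i, j, k}"
        by (simp only: assms(3))
      then show ?thesis
        using \<open>v$k = 0\<close> assms(4,5) by auto
    qed
    then show False
      using eq_0_if_first_coords_eq_0[OF \<open>v \<in> P\<close>] \<open>v \<noteq> 0\<close> by simp
  qed
  define V where "V = (complex_of_real (p k) / v$k) *s v"
  show "V \<in> P"
    unfolding V_def using subspace \<open>v \<in> P\<close> by (rule vec.subspace_scale)
  show "ratio V i = 0" "ratio V j = 0" "ratio V k = 1"
    using assms(4,5) \<open>v$k \<noteq> 0\<close> p_pos[of k] by (simp_all add: V_def ratio_def)
  then have "ratio V ` {0, 1, 2} = {0, 1}"
    unfolding assms(3)[symmetric] by auto
  then show "ratio V ` {3, 4, 5} \<subseteq> {0, 1}"
    using right_ratios_among_left_ratios[OF \<open>V \<in> P\<close>] by (simp add: card_insert_le)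
qed

lemma matching_preserves_ratios:
  assumes V: "V \<in> P" "ratio V 0 = 0" "ratio V 1 = 0" "ratio V 2 = 1" "ratio V ` {3, 4, 5} \<subseteq> {0, 1}"
    and W: "W \<in> P" "ratio W 0 = 0" "ratio W 1 = 1" "ratio W 2 = 0" "ratio W ` {3, 4, 5} \<subseteq> {0, 1}"
  obtains \<sigma> where "bij_betw \<sigma> {0, 1, 2} {3, 4, 5}"
    and "\<And>t. t \<in> {0, 1, 2} \<Longrightarrow>
           p (\<sigma> t) = p t \<and> ratio V (\<sigma> t) = ratio V t \<and> ratio W (\<sigma> t) = ratio W t"
proof -
  \<comment> \<open>The ratios of V and W are binary digits, and those of Y encode both of them.\<close>
  define Y where "Y = V + 2 *s W"
  have "Y \<in> P"
    unfolding Y_def using subspace V(1) W(1) by (simp add: vec.subspace_add vec.subspace_scale)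
  have ratio_Y: "ratio Y a = ratio V a + 2 * ratio W a" for a
    by (simp add: Y_def ratio_def add_divide_distrib)
  have digits: "ratio V a \<in> {0, 1} \<and> ratio W a \<in> {0, 1}" for a
  proof -
    have "a \<in> {0, 1, 2} \<union> {3, 4, 5}"
      unfolding UNIV_6[symmetric] by (rule UNIV_I)
    then show ?thesis
      using V(2-5) W(2-5) by auto
  qed
  have "ratio Y a \<in> {0, 1, 2, 3}" for a
    using digits[of a] by (auto simp: ratio_Y)
  then have "ratio Y ` UNIV \<subseteq> {0, 1, 2, 3}"
    by auto
  then have "card (ratio Y ` UNIV) \<le> 4"
    using card_mono[of "{0, 1, 2, 3}" "ratio Y ` UNIV"] by simp
  then have balance: "(\<Sum>a | a \<in> {0, 1, 2} \<and> ratio Y a = z. p a ^ d)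
           = (\<Sum>a | a \<in> {3, 4, 5} \<and> ratio Y a = z. p a ^ d)" for z
    using ratio_fibres_balance[OF \<open>Y \<in> P\<close>] degree_ge_4 by simp
  have inj: "inj_on (ratio Y) {0, 1, 2}"
    using V(2-4) W(2-4) by (simp add: ratio_Y)
  obtain \<sigma> where \<sigma>: "bij_betw \<sigma> {0, 1, 2} {3, 4, 5}"
    and match: "\<And>t. t \<in> {0, 1, 2} \<Longrightarrow> ratio Y (\<sigma> t) = ratio Y t \<and> p (\<sigma> t) ^ d = p t ^ d"
  proof (rule balanced_fibres_matching[where \<rho> = "ratio Y" and w = "\<lambda>a. p a ^ d"
        and L = "{0, 1, 2}" and R = "{3, 4, 5}"])
    show "finite {3, 4, 5 :: 6}" "card {3, 4, 5 :: 6} \<le> card {0, 1, 2 :: 6}"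
      by simp_all
    show "inj_on (ratio Y) {0, 1, 2}"
      by (rule inj)
    show "0 < p a ^ d" for a
      using p_pos[of a] by simp
    show "sum (\<lambda>a. p a ^ d) {a \<in> {0, 1, 2}. ratio Y a = z}
        = sum (\<lambda>a. p a ^ d) {b \<in> {3, 4, 5}. ratio Y b = z}" for z
      by (rule balance)
  qed (rule that)
  show thesis
  proof (rule that[OF \<sigma>])
    fix t :: 6 assume "t \<in> {0, 1, 2}"
    have "p (\<sigma> t) = p t"
      using match[OF \<open>t \<in> {0, 1, 2}\<close>] p_pos[of t] p_pos[of "\<sigma> t"] degree_ge_4
      by (simp add: power_eq_iff_eq_base less_imp_le)
    moreover have "ratio V (\<sigma> t) = ratio V t \<and> ratio W (\<sigma> t) = ratio W t"
      using match[OF \<open>t \<in> {0, 1, 2}\<close>] digits[of t] digits[of "\<sigma> t"]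
      by (intro binary_digits_eq) (simp_all add: ratio_Y)
    ultimately show "p (\<sigma> t) = p t \<and> ratio V (\<sigma> t) = ratio V t \<and> ratio W (\<sigma> t) = ratio W t"
      by blast
  qed
qed

lemma eq_trivial_plane_if_contains:
  assumes \<sigma>: "bij_betw \<sigma> {0, 1, 2} {3, 4, 5}"
    and Q: "(\<chi> a. complex_of_real (p a)) \<in> trivial_plane \<sigma>"
    and V: "V \<in> P \<inter> trivial_plane \<sigma>" "V$0 = 0" "V$1 = 0" "V$2 = p 2"
    and W: "W \<in> P \<inter> trivial_plane \<sigma>" "W$0 = 0" "W$1 = p 1" "W$2 = 0"
  shows "P = trivial_plane \<sigma>"
proof (rule subspaces_eq_if_coords_determine[OF subspace subspace_trivial_plane, of "{0, 1, 2}"])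
  show "x = 0" if "x \<in> P" "\<forall>t\<in>{0, 1, 2}. x$t = 0" for x
    using that eq_0_if_first_coords_eq_0 by simp
  show "x = 0" if "x \<in> trivial_plane \<sigma>" "\<forall>t\<in>{0, 1, 2}. x$t = 0" for x
    using trivial_plane_coords_determine[OF \<sigma>] that by blast
  let ?Q = "\<chi> a. complex_of_real (p a)"
  have PT: "vec.subspace (P \<inter> trivial_plane \<sigma>)"
    using subspace subspace_trivial_plane by (rule vec.subspace_inter)
  have "?Q \<in> P \<inter> trivial_plane \<sigma>"
    using positive_point Q by simp
  have units: "(1 / p 0) *s (?Q - V - W) \<in> P \<inter> trivial_plane \<sigma>"
      "(1 / p 1) *s W \<in> P \<inter> trivial_plane \<sigma>" "(1 / p 2) *s V \<in> P \<inter> trivial_plane \<sigma>"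
    using \<open>?Q \<in> P \<inter> trivial_plane \<sigma>\<close> V(1) W(1)
    by (simp_all only: vec.subspace_scale[OF PT] vec.subspace_diff[OF PT])
  have "complex_of_real (p a) \<noteq> 0" for a
    using p_pos[of a] by simp
  then have coords: "\<forall>s\<in>{0, 1, 2}. ((1 / p 0) *s (?Q - V - W))$s = (if 0 = s then 1 else 0)"
      "\<forall>s\<in>{0, 1, 2}. ((1 / p 1) *s W)$s = (if 1 = s then 1 else 0)"
      "\<forall>s\<in>{0, 1, 2}. ((1 / p 2) *s V)$s = (if 2 = s then 1 else 0)"
    using V(2-4) W(2-4) by auto
  show "\<exists>x\<in>P \<inter> trivial_plane \<sigma>. \<forall>s\<in>{0, 1, 2}. x$s = (if t = s then 1 else 0)"
    if "t \<in> {0, 1, 2}" for t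
  proof -
    from that consider "t = 0" | "t = 1" | "t = 2" by blast
    then show ?thesis
      by cases (use units coords in blast)+
  qed
qed simp

theorem eq_trivial_plane:
  assumes v: "v \<in> P" "v \<noteq> 0" "v$0 = 0" "v$1 = 0"
    and w: "w \<in> P" "w \<noteq> 0" "w$0 = 0" "w$2 = 0"
  obtains \<sigma> where "bij_betw \<sigma> {0, 1, 2} {3, 4, 5}" and "P = trivial_plane \<sigma>"
proof -
  obtain V where V: "V \<in> P" "ratio V 0 = 0" "ratio V 1 = 0" "ratio V 2 = 1"
    "ratio V ` {3, 4, 5} \<subseteq> {0, 1}"
    by (rule exists_normalised_point[OF v(1,2) refl v(3,4)])
  have "{0, 2, 1} = {0, 1, 2 :: 6}"
    by auto
  then obtain W where W: "W \<in> P" "ratio W 0 = 0" "ratio W 2 = 0" "ratio W 1 = 1"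
    "ratio W ` {3, 4, 5} \<subseteq> {0, 1}"
    by (rule exists_normalised_point[OF w(1,2) _ w(3,4)])
  obtain \<sigma> where \<sigma>: "bij_betw \<sigma> {0, 1, 2} {3, 4, 5}"
    and preserve: "\<And>t. t \<in> {0, 1, 2} \<Longrightarrow>
      p (\<sigma> t) = p t \<and> ratio V (\<sigma> t) = ratio V t \<and> ratio W (\<sigma> t) = ratio W t"
    using matching_preserves_ratios[OF V(1-4) V(5) W(1,2,4,3) W(5)] by blast
  have in_plane: "x \<in> trivial_plane \<sigma>" if "\<And>t. t \<in> {0, 1, 2} \<Longrightarrow> ratio x (\<sigma> t) = ratio x t" for x
    using that preserve by (simp add: trivial_plane_def coord_eq_ratio[of x])
  have "ratio (\<chi> a. complex_of_real (p a)) a = 1" for a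
    using p_pos[of a] by (simp add: ratio_def)
  then have "(\<chi> a. complex_of_real (p a)) \<in> trivial_plane \<sigma>"
    by (intro in_plane) simp
  moreover have "V \<in> trivial_plane \<sigma>" "W \<in> trivial_plane \<sigma>"
    using preserve by (auto intro: in_plane)
  moreover have "V$0 = 0" "V$1 = 0" "V$2 = p 2" "W$0 = 0" "W$1 = p 1" "W$2 = 0"
    using V(2-4) W(2-4) coord_eq_ratio by simp_all
  ultimately show thesis
    using V(1) W(1) by (intro that[OF \<sigma>] eq_trivial_plane_if_contains[OF \<sigma>]) simp_all
qed

end

theorem mainTheorem5:
  fixes c d :: nat and P :: "(complex^6) set" and q :: "rat^6"
  assumes "0 < c" and "c < d" and "4 \<le> d"
    and "is_plane P"
    and "\<forall>x\<in>P. in_X c d x"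
    and "(\<chi> i. of_rat (q$i)) \<in> P"
    and "(\<forall>i. 0 < q$i) \<or> (\<forall>i. q$i < 0)"
  shows "\<exists>i j k :: 6. {i, j, k} = {3, 4, 5} \<and>
           P = {x. x$0 = x$i \<and> x$1 = x$j \<and> x$2 = x$k}"
proof -
  define p where "p a = \<bar>real_of_rat (q$a)\<bar>" for a
  have "vec.subspace P"
    using assms(4) by (rule subspace_if_is_plane)
  moreover have "(\<chi> a. complex_of_real (p a)) \<in> P"
    unfolding p_def using \<open>vec.subspace P\<close> assms(6,7) by (rule abs_point_in_subspace)
  moreover have "0 < p a" for a
    using assms(7) by (auto simp: p_def dest: spec[of _ a])
  ultimately interpret cone_through_positive_point P d p
    using assms(3,5) by unfold_locales (auto simp: in_X_def)
  obtain v where v: "v \<in> P" "v \<noteq> 0" "v$0 = 0" "v$1 = 0"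
    using plane_has_nonzero_point_with_two_zero_coords[OF assms(4)] by blast
  obtain w where w: "w \<in> P" "w \<noteq> 0" "w$0 = 0" "w$2 = 0"
    using plane_has_nonzero_point_with_two_zero_coords[OF assms(4)] by blast
  obtain \<sigma> where \<sigma>: "bij_betw \<sigma> {0, 1, 2} {3, 4, 5}" and "P = trivial_plane \<sigma>"
    by (rule eq_trivial_plane[OF v w])
  have "{\<sigma> 0, \<sigma> 1, \<sigma> 2} = {3, 4, 5}"
    using bij_betw_imp_surj_on[OF \<sigma>] by simp
  moreover have "P = {x. x$0 = x$(\<sigma> 0) \<and> x$1 = x$(\<sigma> 1) \<and> x$2 = x$(\<sigma> 2)}"
    using \<open>P = trivial_plane \<sigma>\<close> by (auto simp: trivial_plane_def)
  ultimately show ?thesis by blast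
qed

end
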